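(* Let $\mathcal M$ be a special local Moufang set with basis $(0,\infty)$ such that $U_\infty$ is abelian, and let $n\ge1$. If for every unit $x$ and every $1\le k\le n$ the point $x\cdot k$ is a unit, then $U_\infty$ is uniquely $k$-divisible for every $1\le k\le n$, i.e. every $u\in U_\infty$ has a unique $v\in U_\infty$ with $v^k=u$.
   Context: Group actions are right actions; $g^h=h^{-1}gh$. For $(X,\sim)$, $\overline x$ is the class of $x$, $\overline X$ the set of classes, $\mathrm{Sym}(X,\sim)$ the bijections $g$ with $x\sim y\iff xg\sim yg$, $\overline U$ the induced group on $\overline X$. A local Moufang set is $(X,\sim)$ with $|\overline X|>2$ and subgroups $U_x\le\mathrm{Sym}(X,\sim)$ ($x\in X$) with: (LM0) $x\sim y\Rightarrow\overline{U_x}=\overline{U_y}$; (LM1) $U_x$ fixes $x$ and is sharply transitive on $X\setminus\overline x$; (LM1') $\overline{U_x}$ fixes $\overline x$ and is sharply transitive on $\overline X\setminus\{\overline x\}$; (LM2) $U_x^g=U_{xg}$ for all $x$ and all $g\in\langle U_y\rangle$. Fix a basis $(0,\infty)$, $0\not\sim\infty$. For $x\not\sim\infty$: $\alpha_x$ is the unique element of $U_\infty$ with $0\alpha_x=x$, $-x:=0\alpha_x^{-1}$, and $x\cdot k:=0\alpha_x^k$. A unit is $x$ with $x\not\sim0,\infty$; $\mu_x$ is the unique element of $U_0\alpha_xU_0$ interchanging $0$ and $\infty$. $\mathcal M$ is special if $\big(-(x\tau^{-1})\big)\tau=-x$ for all units $x$, where $\tau=\mu_e$ for some (equivalently any) unit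 $e$. *)

theory Defs
  imports "HOL-Library.FuncSet"
begin

text \<open>The point set X is the universe of the type 'a; the equivalence
  relation is eq. Permutations are functions 'a => 'a; the right action x g is
  written g x, so the group product g h (first g, then h) is h o g, the inverse
  is inv g, and the conjugate h^g = g^-1 h g is g o h o inv g.\<close>

definition sym_eq :: "('a \<Rightarrow> 'a \<Rightarrow> bool) \<Rightarrow> ('a \<Rightarrow> 'a) set" where
  "sym_eq eq = {g. bij g \<and> (\<forall>x y. eq x y \<longleftrightarrow> eq (g x) (g y))}"

definition is_subgroup_perm :: "('a \<Rightarrow> 'a) set \<Rightarrow> ('a \<Rightarrow> 'a) set \<Rightarrow> bool" where
  "is_subgroup_perm H G \<longleftrightarrow> H \<subseteq> G \<and> id \<in> H \<and>
     (\<forall>g\<in>H. \<forall>h\<in>H. h \<circ> g \<in> H) \<and> (\<forall>g\<in>H. inv g \<in> H)"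

definition cls :: "('a \<Rightarrow> 'a \<Rightarrow> bool) \<Rightarrow> 'a \<Rightarrow> 'a set" where
  "cls eq x = {y. eq x y}"

definition classes :: "('a \<Rightarrow> 'a \<Rightarrow> bool) \<Rightarrow> 'a set set" where
  "classes eq = range (cls eq)"

definition bar :: "('a \<Rightarrow> 'a \<Rightarrow> bool) \<Rightarrow> ('a \<Rightarrow> 'a) \<Rightarrow> ('a set \<Rightarrow> 'a set)" where
  "bar eq g = restrict (\<lambda>C. g ` C) (classes eq)"

definition bar_group :: "('a \<Rightarrow> 'a \<Rightarrow> bool) \<Rightarrow> ('a \<Rightarrow> 'a) set \<Rightarrow> ('a set \<Rightarrow> 'a set) set" where
  "bar_group eq H = bar eq ` H"

inductive_set gen_group :: "('a \<Rightarrow> ('a \<Rightarrow> 'a) set) \<Rightarrow> ('a \<Rightarrow> 'a) set"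
  for U :: "'a \<Rightarrow> ('a \<Rightarrow> 'a) set" where
  gen_id: "id \<in> gen_group U"
| gen_base: "g \<in> U y \<Longrightarrow> g \<in> gen_group U"
| gen_mult: "g \<in> gen_group U \<Longrightarrow> h \<in> gen_group U \<Longrightarrow> h \<circ> g \<in> gen_group U"
| gen_inv: "g \<in> gen_group U \<Longrightarrow> inv g \<in> gen_group U"

definition local_moufang_set :: "('a \<Rightarrow> 'a \<Rightarrow> bool) \<Rightarrow> ('a \<Rightarrow> ('a \<Rightarrow> 'a) set) \<Rightarrow> bool" where
  "local_moufang_set eq U \<longleftrightarrow>
     equivp eq \<and>
     (\<exists>a b c. \<not> eq a b \<and> \<not> eq a c \<and> \<not> eq b c) \<and>
     (\<forall>x. is_subgroup_perm (U x) (sym_eq eq)) \<and>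
     \<comment> \<open>LM0\<close>
     (\<forall>x y. eq x y \<longrightarrow> bar_group eq (U x) = bar_group eq (U y)) \<and>
     \<comment> \<open>LM1\<close>
     (\<forall>x. (\<forall>g\<in>U x. g x = x) \<and>
          (\<forall>y z. \<not> eq x y \<longrightarrow> \<not> eq x z \<longrightarrow> (\<exists>!g. g \<in> U x \<and> g y = z))) \<and>
     \<comment> \<open>LM1'\<close>
     (\<forall>x. (\<forall>f\<in>bar_group eq (U x). f (cls eq x) = cls eq x) \<and>
          (\<forall>C\<in>classes eq - {cls eq x}. \<forall>D\<in>classes eq - {cls eq x}.
              \<exists>!f. f \<in> bar_group eq (U x) \<and> f C = D)) \<and>
     \<comment> \<open>LM2\<close>
     (\<forall>x. \<forall>g\<in>gen_group U. (\<lambda>h. g \<circ> h \<circ> inv g) ` U x = U (g x))"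

definition alpha :: "('a \<Rightarrow> ('a \<Rightarrow> 'a) set) \<Rightarrow> 'a \<Rightarrow> 'a \<Rightarrow> 'a \<Rightarrow> ('a \<Rightarrow> 'a)" where
  "alpha U zero infty x = (THE g. g \<in> U infty \<and> g zero = x)"

definition lneg :: "('a \<Rightarrow> ('a \<Rightarrow> 'a) set) \<Rightarrow> 'a \<Rightarrow> 'a \<Rightarrow> 'a \<Rightarrow> 'a" where
  "lneg U zero infty x = inv (alpha U zero infty x) zero"

definition lmult :: "('a \<Rightarrow> ('a \<Rightarrow> 'a) set) \<Rightarrow> 'a \<Rightarrow> 'a \<Rightarrow> 'a \<Rightarrow> nat \<Rightarrow> 'a" where
  "lmult U zero infty x k = (alpha U zero infty x ^^ k) zero"

definition is_unit :: "('a \<Rightarrow> 'a \<Rightarrow> bool) \<Rightarrow> 'a \<Rightarrow> 'a \<Rightarrow> 'a \<Rightarrow> bool" where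
  "is_unit eq zero infty x \<longleftrightarrow> \<not> eq x zero \<and> \<not> eq x infty"

text \<open>mu x: the unique element of U_0 alpha_x U_0 swapping zero and infty
  (a alpha b in right-action notation is the function b o alpha o a).\<close>
definition mu :: "('a \<Rightarrow> ('a \<Rightarrow> 'a) set) \<Rightarrow> 'a \<Rightarrow> 'a \<Rightarrow> 'a \<Rightarrow> ('a \<Rightarrow> 'a)" where
  "mu U zero infty x = (THE m. (\<exists>a\<in>U zero. \<exists>b\<in>U zero. m = b \<circ> alpha U zero infty x \<circ> a)
                              \<and> m zero = infty \<and> m infty = zero)"

definition special :: "('a \<Rightarrow> 'a \<Rightarrow> bool) \<Rightarrow> ('a \<Rightarrow> ('a \<Rightarrow> 'a) set) \<Rightarrow> 'a \<Rightarrow> 'a \<Rightarrow> bool" where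
  "special eq U zero infty \<longleftrightarrow>
     (\<exists>e. is_unit eq zero infty e \<and>
        (let \<tau> = mu U zero infty e in
          \<forall>x. is_unit eq zero infty x \<longrightarrow>
            \<tau> (lneg U zero infty (inv \<tau> x)) = lneg U zero infty x))"

end

theory Submission
  imports Defs
begin

text \<open>
  Every element of \<open>U\<^sub>\<infinity>\<close> is a root element \<open>\<alpha>\<^sub>a\<close>, and \<open>a\<cdot>k\<close> is \<open>\<alpha>\<^sub>a\<^sup>k\<close> applied to \<open>0\<close>.
  The heart of the argument is the identity \<open>\<tau>(u\<cdot>k)\<cdot>k = \<tau>(u)\<close> for units \<open>u\<close>, proved by
  induction on \<open>k\<close>: conjugation by \<open>\<psi> = \<tau>\<^sup>-\<^sup>1\<alpha>\<^bsub>-\<tau>x\<^esub>\<tau>\<alpha>\<^sub>x\<tau>\<^sup>-\<^sup>1\<alpha>\<^bsub>-\<tau>x\<^esub>\<close>, which fixes \<open>0\<close> and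
  \<open>\<infinity>\<close> and hence commutes with taking multiples, together with specialness produces a relation
  \<open>\<alpha>\<^sub>A = \<alpha>\<^sub>B\<alpha>\<^sub>C\<close> with \<open>\<alpha>\<^sub>C\<^sup>m = \<alpha>\<^sub>B\<close>, and commutativity of \<open>U\<^sub>\<infinity>\<close> turns it into
  \<open>\<alpha>\<^sub>A\<^sup>m = \<alpha>\<^sub>B\<^sup>m\<^sup>+\<^sup>1\<close>.
  Consequently every \<open>\<alpha>\<^sub>a\<close> with \<open>a\<close> a unit is a \<open>k\<close>-th power and \<open>x \<mapsto> x\<cdot>k\<close> is injective
  on units. An arbitrary element of \<open>U\<^sub>\<infinity>\<close> is a product of two such root elements, and a
  \<open>k\<close>-th root of the identity is trivial because \<open>x\<cdot>k\<close> is never \<open>0\<close> for a unit \<open>x\<close>.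
\<close>

lemma sym_eq_bij: "g \<in> sym_eq eq \<Longrightarrow> bij g"
  by (simp add: sym_eq_def)

lemma sym_eq_iff: "g \<in> sym_eq eq \<Longrightarrow> eq (g a) (g b) \<longleftrightarrow> eq a b"
  by (simp add: sym_eq_def)

lemma sym_eq_comp: "g \<in> sym_eq eq \<Longrightarrow> h \<in> sym_eq eq \<Longrightarrow> h \<circ> g \<in> sym_eq eq"
  by (auto simp: sym_eq_def bij_comp)

lemma sym_eq_inv:
  assumes "g \<in> sym_eq eq"
  shows "inv g \<in> sym_eq eq"
proof -
  have "bij g"
    using assms by (rule sym_eq_bij)
  moreover have "eq (inv g x) (inv g y) \<longleftrightarrow> eq x y" for x y
    using sym_eq_iff[OF assms, of "inv g x" "inv g y"] \<open>bij g\<close> by (simp add: bij_is_surj surj_f_inv_f)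
  ultimately show ?thesis
    by (simp add: sym_eq_def bij_imp_bij_inv)
qed

lemma funpow_semiconj:
  assumes "h \<circ> f = g \<circ> h"
  shows "h \<circ> f ^^ k = g ^^ k \<circ> h"
proof (induction k)
  case (Suc k)
  have "h \<circ> f ^^ Suc k = (h \<circ> f ^^ k) \<circ> f"
    by (simp only: funpow_Suc_right comp_assoc)
  also have "\<dots> = g ^^ k \<circ> (h \<circ> f)"
    by (simp only: Suc.IH comp_assoc)
  also have "\<dots> = g ^^ Suc k \<circ> h"
    by (simp only: assms funpow_Suc_right comp_assoc)
  finally show ?case .
qed simp

lemma funpow_comp_commute:
  assumes "f \<circ> g = g \<circ> f"
  shows "(f \<circ> g) ^^ k = f ^^ k \<circ> g ^^ k"
proof (induction k)
  case (Suc k)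
  have "f \<circ> g ^^ k = g ^^ k \<circ> f"
    using assms by (rule funpow_semiconj)
  then have "(f ^^ k \<circ> g ^^ k) \<circ> (f \<circ> g) = (f ^^ k \<circ> f) \<circ> (g ^^ k \<circ> g)"
    by (metis comp_assoc)
  then show ?case
    by (simp only: Suc.IH funpow_Suc_right)
qed simp

locale local_moufang =
  fixes eq :: "'a \<Rightarrow> 'a \<Rightarrow> bool" and U :: "'a \<Rightarrow> ('a \<Rightarrow> 'a) set"
  assumes local_moufang: "local_moufang_set eq U"
begin

lemma equivp_eq: "equivp eq"
  using local_moufang unfolding local_moufang_set_def by (elim conjE) assumption

lemma U_subgroups: "\<forall>x. is_subgroup_perm (U x) (sym_eq eq)"
  using local_moufang unfolding local_moufang_set_def by (elim conjE) assumption

lemma U_stabilizers: "\<forall>x. (\<forall>g\<in>U x. g x = x) \<and>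
    (\<forall>y z. \<not> eq x y \<longrightarrow> \<not> eq x z \<longrightarrow> (\<exists>!g. g \<in> U x \<and> g y = z))"
  using local_moufang unfolding local_moufang_set_def by (elim conjE) assumption

lemma U_conjugates: "\<forall>x. \<forall>g\<in>gen_group U. (\<lambda>h. g \<circ> h \<circ> inv g) ` U x = U (g x)"
  using local_moufang unfolding local_moufang_set_def by (elim conjE) assumption

lemma U_subgroup: "is_subgroup_perm (U x) (sym_eq eq)"
  using U_subgroups by (rule spec)

lemma U_fixes: "g \<in> U x \<Longrightarrow> g x = x"
  using U_stabilizers by blast

lemma U_sharply_transitive: "\<not> eq x y \<Longrightarrow> \<not> eq x z \<Longrightarrow> \<exists>!g. g \<in> U x \<and> g y = z"
  using conjunct2[OF spec[OF U_stabilizers, of x]] by blast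

lemma U_conj: "g \<in> gen_group U \<Longrightarrow> h \<in> U x \<Longrightarrow> g \<circ> h \<circ> inv g \<in> U (g x)"
  using U_conjugates by blast

lemma eq_refl: "eq x x"
  using equivp_eq by (rule equivp_reflp)

lemma eq_sym: "eq x y \<Longrightarrow> eq y x"
  using equivp_eq by (rule equivp_symp)

lemma eq_trans: "eq x y \<Longrightarrow> eq y z \<Longrightarrow> eq x z"
  using equivp_eq by (rule equivp_transp)

lemma U_sym_eq: "g \<in> U x \<Longrightarrow> g \<in> sym_eq eq"
  using U_subgroup[of x] by (auto simp: is_subgroup_perm_def)

lemma U_bij: "g \<in> U x \<Longrightarrow> bij g"
  by (rule sym_eq_bij[OF U_sym_eq])

lemma U_eq_iff: "g \<in> U x \<Longrightarrow> eq (g a) (g b) \<longleftrightarrow> eq a b"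
  by (rule sym_eq_iff[OF U_sym_eq])

lemma U_id: "id \<in> U x"
  using U_subgroup[of x] by (simp add: is_subgroup_perm_def)

lemma U_comp: "g \<in> U x \<Longrightarrow> h \<in> U x \<Longrightarrow> h \<circ> g \<in> U x"
  using U_subgroup[of x] by (simp add: is_subgroup_perm_def)

lemma U_inv: "g \<in> U x \<Longrightarrow> inv g \<in> U x"
  using U_subgroup[of x] by (simp add: is_subgroup_perm_def)

lemma U_funpow: "g \<in> U x \<Longrightarrow> g ^^ k \<in> U x"
  by (induction k) (simp_all add: U_id U_comp)

lemma U_eqI:
  assumes "\<not> eq x y" "g \<in> U x" "h \<in> U x" "g y = h y"
  shows "g = h"
proof -
  have "\<not> eq x (g y)"
    using U_eq_iff[OF assms(2), of x y] U_fixes[OF assms(2)] assms(1) by simp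
  then have "\<exists>!f. f \<in> U x \<and> f y = g y"
    by (rule U_sharply_transitive[OF assms(1)])
  then show ?thesis
    using assms(2-4) by (metis (mono_tags))
qed

lemma gen_group_sym_eq: "g \<in> gen_group U \<Longrightarrow> g \<in> sym_eq eq"
proof (induction rule: gen_group.induct)
  case gen_id
  show ?case
    using bij_id by (simp add: sym_eq_def id_def)
qed (blast intro: U_sym_eq sym_eq_comp sym_eq_inv)+

end

locale local_moufang_basis = local_moufang +
  fixes zero infty :: 'a
  assumes basis: "\<not> eq zero infty"
begin

abbreviation "\<alpha> \<equiv> alpha U zero infty"
abbreviation "neg \<equiv> lneg U zero infty"
abbreviation "mul \<equiv> lmult U zero infty"
abbreviation "unit \<equiv> is_unit eq zero infty"

lemma infty_not_eq_zero: "\<not> eq infty zero"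
  using basis eq_sym by blast

lemma unit_not_eq_infty: "unit a \<Longrightarrow> \<not> eq a infty"
  by (simp add: is_unit_def)

lemma
  assumes "\<not> eq a infty"
  shows alpha_in_U: "\<alpha> a \<in> U infty" and alpha_zero: "\<alpha> a zero = a"
proof -
  have "\<exists>!g. g \<in> U infty \<and> g zero = a"
    using U_sharply_transitive infty_not_eq_zero assms eq_sym by blast
  then have "\<alpha> a \<in> U infty \<and> \<alpha> a zero = a"
    unfolding alpha_def by (rule theI')
  then show "\<alpha> a \<in> U infty" "\<alpha> a zero = a"
    by auto
qed

lemma U_infty_not_eq_infty:
  assumes "g \<in> U infty" "\<not> eq a infty"
  shows "\<not> eq (g a) infty"
  using U_eq_iff[OF assms(1), of a infty] U_fixes[OF assms(1)] assms(2) by simp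

lemma U_infty_eq_alpha:
  assumes "g \<in> U infty"
  shows "g = \<alpha> (g zero)"
proof -
  have "\<not> eq (g zero) infty"
    using U_infty_not_eq_infty assms basis by blast
  then show ?thesis
    using U_eqI[OF infty_not_eq_zero assms alpha_in_U] alpha_zero by simp
qed

lemma inv_alpha: "\<not> eq a infty \<Longrightarrow> inv (\<alpha> a) = \<alpha> (neg a)"
  unfolding lneg_def by (rule U_infty_eq_alpha[OF U_inv[OF alpha_in_U]])

lemma lneg_not_eq_infty: "\<not> eq a infty \<Longrightarrow> \<not> eq (neg a) infty"
  unfolding lneg_def by (rule U_infty_not_eq_infty[OF U_inv[OF alpha_in_U] basis])

lemma lmult_0: "mul a 0 = zero"
  by (simp add: lmult_def)

lemma lmult_Suc: "mul a (Suc m) = \<alpha> a (mul a m)"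
  by (simp add: lmult_def)

lemma lmult_1: "\<not> eq a infty \<Longrightarrow> mul a 1 = a"
  by (simp add: lmult_def alpha_zero)

lemma alpha_funpow: "\<not> eq a infty \<Longrightarrow> \<alpha> a ^^ k = \<alpha> (mul a k)"
  unfolding lmult_def by (rule U_infty_eq_alpha[OF U_funpow[OF alpha_in_U]])

lemma lmult_lmult:
  assumes "\<not> eq a infty"
  shows "mul (mul a j) k = mul a (j * k)"
proof -
  have "\<alpha> (mul a j) ^^ k = \<alpha> a ^^ (j * k)"
    by (simp only: alpha_funpow[OF assms, symmetric] funpow_mult)
  then show ?thesis
    by (simp add: lmult_def)
qed

lemma alpha_lmult_apply:
  assumes "\<not> eq a infty"
  shows "\<alpha> (mul a m) a = mul a (Suc m)"
proof -
  have "\<alpha> (mul a m) a = (\<alpha> a ^^ m) (\<alpha> a zero)"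
    using alpha_funpow[OF assms] alpha_zero[OF assms] by simp
  also have "\<dots> = mul a (Suc m)"
    unfolding lmult_def by (simp add: funpow_Suc_right del: funpow.simps)
  finally show ?thesis .
qed

lemma alpha_lneg_lmult_Suc:
  assumes "\<not> eq a infty"
  shows "\<alpha> (neg a) (mul a (Suc m)) = mul a m"
  using U_bij[OF alpha_in_U[OF assms]]
  by (simp add: lmult_Suc inv_alpha[OF assms, symmetric] bij_is_inj inv_f_f)

lemma alpha_lneg_self: "\<not> eq a infty \<Longrightarrow> \<alpha> (neg a) a = zero"
  using alpha_lneg_lmult_Suc[of a 0] lmult_1[of a] by (simp add: lmult_0)

lemma alpha_apply_lneg: "\<not> eq a infty \<Longrightarrow> \<alpha> a (neg a) = zero"
  unfolding lneg_def using U_bij[OF alpha_in_U] by (simp add: bij_is_surj surj_f_inv_f)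

lemma is_unit_lneg:
  assumes "unit a"
  shows "unit (neg a)"
proof -
  have a: "\<not> eq a infty"
    using assms by (rule unit_not_eq_infty)
  have "eq (neg a) zero \<longleftrightarrow> eq (\<alpha> a (neg a)) (\<alpha> a zero)"
    using U_eq_iff[OF alpha_in_U[OF a]] by simp
  then have "eq (neg a) zero \<longleftrightarrow> eq zero a"
    using alpha_apply_lneg[OF a] alpha_zero[OF a] by simp
  then show ?thesis
    using assms lneg_not_eq_infty[OF a] eq_sym by (auto simp: is_unit_def)
qed

lemma U_infty_is_unit_apply:
  assumes "g \<in> U infty" "eq (g zero) zero" "unit a"
  shows "unit (g a)"
proof -
  have "\<not> eq (g a) (g zero)"
    using U_eq_iff[OF assms(1)] assms(3) by (simp add: is_unit_def)
  then have "\<not> eq (g a) zero"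
    using assms(2) eq_sym eq_trans by blast
  then show ?thesis
    using U_infty_not_eq_infty[OF assms(1) unit_not_eq_infty[OF assms(3)]] by (simp add: is_unit_def)
qed

lemma ex1_swap_in_U_zero_alpha_U_zero:
  assumes "unit x"
  shows "\<exists>!m. (\<exists>a\<in>U zero. \<exists>b\<in>U zero. m = b \<circ> \<alpha> x \<circ> a) \<and> m zero = infty \<and> m infty = zero"
proof -
  have x: "\<not> eq x infty" "\<not> eq zero x"
    using assms eq_sym by (auto simp: is_unit_def)
  have "\<not> eq zero (neg x)"
    using is_unit_lneg[OF assms] eq_sym by (auto simp: is_unit_def)
  then obtain a where a: "a \<in> U zero" "a infty = neg x"
    using U_sharply_transitive[OF basis] by blast
  obtain b where b: "b \<in> U zero" "b x = infty"
    using U_sharply_transitive[OF x(2) basis] by blast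
  have swap: "(b \<circ> \<alpha> x \<circ> a) zero = infty" "(b \<circ> \<alpha> x \<circ> a) infty = zero"
    using a b U_fixes[OF a(1)] U_fixes[OF b(1)] alpha_zero[OF x(1)] alpha_apply_lneg[OF x(1)]
    by simp_all
  have unique: "m = b \<circ> \<alpha> x \<circ> a"
    if "a' \<in> U zero" "b' \<in> U zero" "m = b' \<circ> \<alpha> x \<circ> a'" "m zero = infty" "m infty = zero"
    for m a' b'
  proof -
    have "b' (\<alpha> x (a' infty)) = b' zero"
      using that U_fixes[OF that(2)] by simp
    then have "\<alpha> x (a' infty) = \<alpha> x (a infty)"
      using U_bij[OF that(2)] a alpha_apply_lneg[OF x(1)] by (simp add: bij_is_inj inj_eq)
    then have "a' infty = a infty"
      using U_bij[OF alpha_in_U[OF x(1)]] by (simp add: bij_is_inj inj_eq)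
    then have "a' = a"
      using U_eqI[OF basis that(1) a(1)] by simp
    moreover have "b' x = b x"
      using that b U_fixes[OF that(1)] alpha_zero[OF x(1)] by simp
    then have "b' = b"
      by (rule U_eqI[OF x(2) that(2) b(1)])
    ultimately show ?thesis
      using that(3) by simp
  qed
  show ?thesis
    by (rule ex1I[of _ "b \<circ> \<alpha> x \<circ> a"]) (use a(1) b(1) swap unique in blast)+
qed

lemma
  assumes "unit x"
  shows mu_in_gen_group: "mu U zero infty x \<in> gen_group U"
    and mu_zero: "mu U zero infty x zero = infty"
    and mu_infty: "mu U zero infty x infty = zero"
proof -
  have mu: "(\<exists>a\<in>U zero. \<exists>b\<in>U zero. mu U zero infty x = b \<circ> \<alpha> x \<circ> a)
      \<and> mu U zero infty x zero = infty \<and> mu U zero infty x infty = zero"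
    unfolding mu_def by (rule theI'[OF ex1_swap_in_U_zero_alpha_U_zero[OF assms]])
  then show "mu U zero infty x zero = infty" "mu U zero infty x infty = zero"
    by simp_all
  from mu obtain a b where "a \<in> U zero" "b \<in> U zero" "mu U zero infty x = b \<circ> \<alpha> x \<circ> a"
    by blast
  moreover have "\<alpha> x \<in> gen_group U"
    using alpha_in_U[OF unit_not_eq_infty[OF assms]] by (rule gen_base)
  ultimately show "mu U zero infty x \<in> gen_group U"
    by (metis gen_base gen_mult)
qed

lemma gen_group_fixing_basis_lmult:
  assumes "\<psi> \<in> gen_group U" "\<psi> zero = zero" "\<psi> infty = infty" "\<not> eq a infty"
  shows "\<psi> (mul a k) = mul (\<psi> a) k"
proof -
  have "bij \<psi>"
    using sym_eq_bij[OF gen_group_sym_eq[OF assms(1)]] .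
  define c where "c = \<psi> \<circ> \<alpha> a \<circ> inv \<psi>"
  have "c \<in> U infty"
    unfolding c_def using U_conj[OF assms(1) alpha_in_U[OF assms(4)]] assms(3) by simp
  moreover have "c zero = \<psi> a"
    unfolding c_def using \<open>bij \<psi>\<close> assms(2) alpha_zero[OF assms(4)] by (metis bij_is_inj comp_apply inv_f_f)
  ultimately have "c = \<alpha> (\<psi> a)"
    using U_infty_eq_alpha by metis
  moreover have "\<psi> \<circ> \<alpha> a = c \<circ> \<psi>"
    unfolding c_def using \<open>bij \<psi>\<close> by (auto simp: bij_is_inj inv_f_f)
  ultimately have "\<psi> \<circ> \<alpha> a ^^ k = \<alpha> (\<psi> a) ^^ k \<circ> \<psi>"
    by (simp add: funpow_semiconj)
  then show ?thesis
    using assms(2) by (simp add: lmult_def fun_eq_iff)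
qed

lemma is_unit_swap_apply:
  assumes "g \<in> sym_eq eq" "g zero = infty" "g infty = zero" "unit x"
  shows "unit (g x)"
  using sym_eq_iff[OF assms(1), of x zero] sym_eq_iff[OF assms(1), of x infty] assms(2-4)
  by (simp add: is_unit_def)

lemma alpha_eq_comp_if_alpha_lneg_apply:
  assumes "\<not> eq a infty" "\<not> eq b infty" "\<not> eq c infty" "\<alpha> (neg a) b = neg c"
  shows "\<alpha> a = \<alpha> b \<circ> \<alpha> c"
proof -
  have "\<alpha> (neg a) \<circ> \<alpha> b \<in> U infty"
    using U_comp alpha_in_U assms(2) lneg_not_eq_infty[OF assms(1)] by blast
  then have "\<alpha> (neg a) \<circ> \<alpha> b = \<alpha> (neg c)"
    using U_infty_eq_alpha alpha_zero[OF assms(2)] assms(4) by force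
  then have "inv (\<alpha> a) \<circ> \<alpha> b = inv (\<alpha> c)"
    using inv_alpha assms(1,3) by simp
  then have "inv (\<alpha> a) (\<alpha> b (\<alpha> c x)) = x" for x
    using U_bij[OF alpha_in_U[OF assms(3)]] by (metis bij_is_inj comp_apply inv_f_f)
  then have "\<alpha> b (\<alpha> c x) = \<alpha> a x" for x
    using U_bij[OF alpha_in_U[OF assms(1)]] by (metis bij_is_surj surj_f_inv_f)
  then show ?thesis
    by auto
qed

end

locale abelian_local_moufang_basis = local_moufang_basis +
  assumes abelian: "\<forall>g\<in>U infty. \<forall>h\<in>U infty. g \<circ> h = h \<circ> g"
begin

lemma U_infty_commute: "g \<in> U infty \<Longrightarrow> h \<in> U infty \<Longrightarrow> g \<circ> h = h \<circ> g"
  using abelian by blast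

lemma lmult_lneg:
  assumes "\<not> eq a infty"
  shows "mul (neg a) k = neg (mul a k)"
proof -
  have bij: "bij (\<alpha> a)"
    using U_bij[OF alpha_in_U[OF assms]] .
  have inverse: "\<alpha> (neg a) \<circ> \<alpha> a = id" "\<alpha> a \<circ> \<alpha> (neg a) = id"
    unfolding inv_alpha[OF assms, symmetric]
    using bij by (simp_all add: bij_is_inj bij_is_surj flip: inj_iff surj_iff)
  have "\<alpha> (neg a) \<circ> \<alpha> a = \<alpha> a \<circ> \<alpha> (neg a)"
    using U_infty_commute[OF alpha_in_U alpha_in_U] assms lneg_not_eq_infty by blast
  then have "\<alpha> (neg a) ^^ k \<circ> \<alpha> a ^^ k = id" "\<alpha> a ^^ k \<circ> \<alpha> (neg a) ^^ k = id"
    using funpow_comp_commute inverse by (metis id_funpow)+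
  then have "inv (\<alpha> (mul a k)) = \<alpha> (neg a) ^^ k"
    unfolding alpha_funpow[OF assms, symmetric] by (rule inv_unique_comp[rotated])
  then show ?thesis
    by (simp add: lneg_def lmult_def)
qed

lemma lmult_Suc_if_alpha_eq_comp:
  assumes "\<not> eq a infty" "\<not> eq b infty" "\<not> eq c infty" "\<alpha> a = \<alpha> b \<circ> \<alpha> c" "mul c m = b"
  shows "mul a m = mul b (Suc m)"
proof -
  have "\<alpha> b \<circ> \<alpha> c = \<alpha> c \<circ> \<alpha> b"
    using U_infty_commute[OF alpha_in_U alpha_in_U] assms(2,3) .
  then have "\<alpha> a ^^ m = \<alpha> b ^^ m \<circ> \<alpha> c ^^ m"
    unfolding assms(4) by (rule funpow_comp_commute)
  also have "\<dots> = \<alpha> b ^^ Suc m"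
    using alpha_funpow[OF assms(3)] assms(5) by (simp only: funpow_Suc_right)
  finally show ?thesis
    by (simp add: lmult_def)
qed

end

locale special_abelian_local_moufang_basis = abelian_local_moufang_basis +
  fixes e :: 'a
  assumes unit_e: "unit e"
    and special_e: "\<forall>x. unit x \<longrightarrow> mu U zero infty e (neg (inv (mu U zero infty e) x)) = neg x"
begin

abbreviation "\<tau> \<equiv> mu U zero infty e"

lemmas tau_in_gen_group = mu_in_gen_group[OF unit_e]
  and tau_zero = mu_zero[OF unit_e]
  and tau_infty = mu_infty[OF unit_e]

lemma inv_tau_in_gen_group: "inv \<tau> \<in> gen_group U"
  using tau_in_gen_group by (rule gen_inv)

lemma bij_tau: "bij \<tau>"
  using sym_eq_bij[OF gen_group_sym_eq[OF tau_in_gen_group]] .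

lemma inv_tau_tau: "inv \<tau> (\<tau> x) = x"
  using bij_tau by (simp add: bij_is_inj inv_f_f)

lemma tau_inv_tau: "\<tau> (inv \<tau> x) = x"
  using bij_tau by (simp add: bij_is_surj surj_f_inv_f)

lemma inv_tau_zero: "inv \<tau> zero = infty"
  using inv_tau_tau[of infty] tau_infty by simp

lemma inv_tau_infty: "inv \<tau> infty = zero"
  using inv_tau_tau[of zero] tau_zero by simp

lemma is_unit_tau: "unit x \<Longrightarrow> unit (\<tau> x)"
  using is_unit_swap_apply[OF gen_group_sym_eq[OF tau_in_gen_group] tau_zero tau_infty] .

lemma is_unit_inv_tau: "unit x \<Longrightarrow> unit (inv \<tau> x)"
  using is_unit_swap_apply[OF gen_group_sym_eq[OF inv_tau_in_gen_group] inv_tau_zero inv_tau_infty] .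

lemma inv_tau_lneg: "unit x \<Longrightarrow> inv \<tau> (neg x) = neg (inv \<tau> x)"
  using special_e inv_tau_tau by metis

lemma tau_lneg: "unit x \<Longrightarrow> \<tau> (neg x) = neg (\<tau> x)"
  using special_e is_unit_tau inv_tau_tau by metis

lemma alpha_lneg_tau_apply:
  assumes "unit x"
  shows "\<alpha> (neg (\<tau> x)) (\<tau> (\<alpha> x (inv \<tau> (mul (\<tau> x) m)))) = \<tau> (mul (neg x) (Suc m))"
proof -
  define y where "y = \<tau> x"
  have x: "\<not> eq x infty" and y: "\<not> eq y infty" and ny: "\<not> eq (neg y) infty"
    unfolding y_def using assms is_unit_tau lneg_not_eq_infty unit_not_eq_infty by blast+
  have neg_x: "inv \<tau> (neg y) = neg x"
    unfolding y_def using inv_tau_lneg[OF is_unit_tau[OF assms]] inv_tau_tau by simp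
  define \<psi> where "\<psi> = inv \<tau> \<circ> \<alpha> (neg y) \<circ> \<tau> \<circ> \<alpha> x \<circ> inv \<tau> \<circ> \<alpha> (neg y)"
  have "\<psi> \<in> gen_group U"
    unfolding \<psi>_def using alpha_in_U[OF x] alpha_in_U[OF ny]
    by (intro gen_mult gen_base inv_tau_in_gen_group tau_in_gen_group)
  moreover have "\<psi> zero = zero" "\<psi> infty = infty" "\<psi> y = neg x"
    unfolding \<psi>_def
    using alpha_zero[OF x] alpha_zero[OF ny] U_fixes[OF alpha_in_U[OF x]]
      U_fixes[OF alpha_in_U[OF ny]] alpha_apply_lneg[OF x] alpha_lneg_self[OF y]
      neg_x tau_zero tau_infty inv_tau_zero inv_tau_infty y_def
    by simp_all
  ultimately have "\<psi> (mul y (Suc m)) = mul (neg x) (Suc m)"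
    using gen_group_fixing_basis_lmult y by metis
  then have "inv \<tau> (\<alpha> (neg y) (\<tau> (\<alpha> x (inv \<tau> (mul y m))))) = mul (neg x) (Suc m)"
    unfolding \<psi>_def using alpha_lneg_lmult_Suc[OF y] by simp
  then show ?thesis
    unfolding y_def by (metis tau_inv_tau)
qed

lemma lmult_tau_lmult_Suc:
  assumes IH: "\<And>u. unit u \<Longrightarrow> mul (\<tau> (mul u m)) m = \<tau> u"
    and units: "unit u" "unit (mul u m)" "unit (mul u (Suc m))" "unit (mul (mul u m) (Suc m))"
  shows "mul (\<tau> (mul u (Suc m))) (Suc m) = \<tau> u"
proof -
  define a b c where "a = \<tau> (mul u m)" and "b = \<tau> (mul u (Suc m))"
    and "c = \<tau> (mul (mul u m) (Suc m))"
  have a: "\<not> eq a infty" and b: "\<not> eq b infty" and c: "\<not> eq c infty"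
    unfolding a_def b_def c_def using units is_unit_tau unit_not_eq_infty by blast+
  have u: "\<not> eq u infty"
    using units(1) by (rule unit_not_eq_infty)
  have "mul c m = b"
    unfolding b_def c_def
    using IH[OF units(3)] lmult_lmult[OF u] by (simp add: mult.commute)
  moreover have "\<alpha> (neg a) b = neg c"
  proof -
    have "\<alpha> (neg a) (\<tau> (\<alpha> (mul u m) (inv \<tau> (mul a m)))) = \<tau> (mul (neg (mul u m)) (Suc m))"
      unfolding a_def by (rule alpha_lneg_tau_apply[OF units(2)])
    then show ?thesis
      unfolding a_def b_def c_def
      using IH[OF units(1)] inv_tau_tau alpha_lmult_apply[OF u]
        lmult_lneg[OF unit_not_eq_infty[OF units(2)]] tau_lneg[OF units(4)]
      by simp
  qed
  then have "\<alpha> a = \<alpha> b \<circ> \<alpha> c"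
    using a b c by (rule alpha_eq_comp_if_alpha_lneg_apply[rotated 3])
  ultimately have "mul a m = mul b (Suc m)"
    using a b c lmult_Suc_if_alpha_eq_comp by blast
  then show ?thesis
    unfolding a_def b_def using IH[OF units(1)] by simp
qed

lemma lmult_tau_lmult:
  assumes "\<And>x j. unit x \<Longrightarrow> 1 \<le> j \<Longrightarrow> j \<le> k \<Longrightarrow> unit (mul x j)" "1 \<le> k" "unit u"
  shows "mul (\<tau> (mul u k)) k = \<tau> u"
  using assms(2,1,3)
proof (induction k arbitrary: u rule: nat_induct_at_least)
  case base
  then show ?case
    using is_unit_tau unit_not_eq_infty lmult_1 by simp
next
  case (Suc m)
  then show ?case
    using lmult_tau_lmult_Suc[of m u] by force
qed

context
  fixes k :: nat
  assumes k_ge_1: "1 \<le> k"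
    and is_unit_lmult: "\<And>x j. unit x \<Longrightarrow> 1 \<le> j \<Longrightarrow> j \<le> k \<Longrightarrow> unit (mul x j)"
begin

lemma lmult_inj_on_units:
  assumes "unit x" "unit y" "mul x k = mul y k"
  shows "x = y"
proof -
  have "\<tau> x = \<tau> y"
    using lmult_tau_lmult[OF is_unit_lmult k_ge_1] assms by metis
  then show ?thesis
    using inv_tau_tau by metis
qed

lemma alpha_has_root:
  assumes "unit a"
  shows "\<exists>v\<in>U infty. v ^^ k = \<alpha> a"
proof -
  define b where "b = \<tau> (mul (inv \<tau> a) k)"
  have "unit b"
    unfolding b_def using assms is_unit_inv_tau is_unit_lmult[OF _ k_ge_1] is_unit_tau by blast
  moreover have "mul b k = a"
    unfolding b_def using lmult_tau_lmult[OF is_unit_lmult k_ge_1 is_unit_inv_tau[OF assms]]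
    by (simp add: tau_inv_tau)
  ultimately show ?thesis
    using alpha_in_U alpha_funpow unit_not_eq_infty by metis
qed

lemma U_infty_has_root:
  assumes "u \<in> U infty"
  shows "\<exists>v\<in>U infty. v ^^ k = u"
proof (cases "eq (u zero) zero")
  case False
  then have "unit (u zero)"
    using U_infty_not_eq_infty[OF assms basis] by (simp add: is_unit_def)
  then show ?thesis
    using alpha_has_root U_infty_eq_alpha[OF assms] by metis
next
  case True
  have e: "\<not> eq e infty"
    using unit_e by (rule unit_not_eq_infty)
  define w where "w = u \<circ> \<alpha> (neg e)"
  have "w \<in> U infty"
    unfolding w_def using U_comp alpha_in_U lneg_not_eq_infty[OF e] assms by blast
  moreover have "unit (w zero)"
    unfolding w_def using U_infty_is_unit_apply[OF assms True is_unit_lneg[OF unit_e]] alpha_zero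
      lneg_not_eq_infty[OF e] by simp
  ultimately obtain v where v: "v \<in> U infty" "v ^^ k = w"
    using alpha_has_root U_infty_eq_alpha by metis
  obtain v' where v': "v' \<in> U infty" "v' ^^ k = \<alpha> e"
    using alpha_has_root[OF unit_e] by blast
  have "u = w \<circ> \<alpha> e"
    unfolding w_def inv_alpha[OF e, symmetric]
    using U_bij[OF alpha_in_U[OF e]] by (simp add: comp_assoc bij_is_inj)
  also have "\<dots> = (v \<circ> v') ^^ k"
    using funpow_comp_commute[OF U_infty_commute[OF v(1) v'(1)]] v v' by simp
  finally show ?thesis
    using U_comp[OF v'(1) v(1)] by metis
qed

lemma U_infty_funpow_eq_id:
  assumes "d \<in> U infty" "d ^^ k = id"
  shows "d = id"
proof (cases "eq (d zero) zero")
  case False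
  then have "unit (d zero)"
    using U_infty_not_eq_infty[OF assms(1) basis] by (simp add: is_unit_def)
  moreover have "mul (d zero) k = zero"
    using U_infty_eq_alpha[OF assms(1)] assms(2) by (metis id_apply lmult_def)
  ultimately have False
    using is_unit_lmult[OF _ k_ge_1 order_refl] eq_refl by (metis is_unit_def)
  then show ?thesis ..
next
  case True
  have e: "\<not> eq e infty"
    using unit_e by (rule unit_not_eq_infty)
  have "unit (d e)"
    using U_infty_is_unit_apply[OF assms(1) True unit_e] .
  moreover have "\<alpha> (d e) = d \<circ> \<alpha> e"
    using U_infty_eq_alpha U_comp[OF alpha_in_U[OF e] assms(1)] alpha_zero[OF e] by force
  then have "mul (d e) k = mul e k"
    using funpow_comp_commute[OF U_infty_commute[OF assms(1) alpha_in_U[OF e]]] assms(2)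
    by (simp add: lmult_def)
  ultimately have "d e = id e"
    using lmult_inj_on_units unit_e by simp
  then show ?thesis
    using U_eqI[OF _ assms(1) U_id] e eq_sym by blast
qed

lemma U_infty_root_unique:
  assumes "v \<in> U infty" "w \<in> U infty" "v ^^ k = w ^^ k"
  shows "v = w"
proof -
  define d where "d = v \<circ> inv w"
  have "d \<in> U infty"
    unfolding d_def using U_comp[OF U_inv[OF assms(2)] assms(1)] .
  have "v = d \<circ> w"
    unfolding d_def using U_bij[OF assms(2)] by (simp add: comp_assoc bij_is_inj)
  then have "d ^^ k \<circ> w ^^ k = w ^^ k"
    using funpow_comp_commute[OF U_infty_commute[OF \<open>d \<in> U infty\<close> assms(2)]] assms(3) by simp
  then have "d ^^ k = id"
    using U_bij[OF U_funpow[OF assms(2)]] by (metis bij_is_surj comp_assoc comp_id surj_iff)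
  then show ?thesis
    using \<open>v = d \<circ> w\<close> U_infty_funpow_eq_id[OF \<open>d \<in> U infty\<close>] by simp
qed

lemma U_infty_uniquely_divisible:
  "u \<in> U infty \<Longrightarrow> \<exists>!v. v \<in> U infty \<and> v ^^ k = u"
  using U_infty_has_root U_infty_root_unique by metis

end

end

theorem mainTheorem15:
  fixes eq :: "'a \<Rightarrow> 'a \<Rightarrow> bool" and U :: "'a \<Rightarrow> ('a \<Rightarrow> 'a) set"
    and zero infty :: 'a and n :: nat
  assumes "local_moufang_set eq U"
    and "\<not> eq zero infty"
    and "special eq U zero infty"
    and "\<forall>g\<in>U infty. \<forall>h\<in>U infty. g \<circ> h = h \<circ> g"
    and "n \<ge> 1"
    and "\<forall>x. is_unit eq zero infty x \<longrightarrow>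
           (\<forall>k. 1 \<le> k \<and> k \<le> n \<longrightarrow> is_unit eq zero infty (lmult U zero infty x k))"
  shows "\<forall>k. 1 \<le> k \<and> k \<le> n \<longrightarrow>
           (\<forall>u\<in>U infty. \<exists>!v. v \<in> U infty \<and> v ^^ k = u)"
proof (intro allI impI ballI)
  fix k u
  assume k: "1 \<le> k \<and> k \<le> n" and u: "u \<in> U infty"
  from assms(3) obtain e where "is_unit eq zero infty e"
    and "\<forall>x. is_unit eq zero infty x \<longrightarrow>
      mu U zero infty e (lneg U zero infty (inv (mu U zero infty e) x)) = lneg U zero infty x"
    unfolding special_def Let_def by blast
  then interpret special_abelian_local_moufang_basis eq U zero infty e
    using assms(1,2,4) by unfold_locales
  show "\<exists>!v. v \<in> U infty \<and> v ^^ k = u"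
    using U_infty_uniquely_divisible[of k] k u assms(6) by auto
qed

end
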